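(* Let $X$ be a spectral space. The map $\varphi':X^{\mathrm{inv}}\to\mathcal X'(X)^{\mathrm{zar}}$, $x\mapsto \mathrm{Cl}(\{x\})$, is a topological embedding.
   Context: For a spectral space $X$, $\mathrm{Cl}$ denotes closure in its given topology, and $X^{\mathrm{inv}}$ is $X$ with the inverse topology, i.e. the topology having the quasi-compact open subsets of $X$ as a basis of closed sets. $\mathcal X'(X)$ is the set of nonempty closed subsets of $X$; its Zariski topology has as basis of open sets the sets $\mathcal U'(\Omega):=\{Y\in\mathcal X'(X)\mid Y\cap\Omega=\emptyset\}$, where $\Omega$ ranges over quasi-compact open subsets of $X$. *)

theory Defs
  imports "HOL-Analysis.Analysis"
begin

definition qc_open :: "'a topology \<Rightarrow> 'a set \<Rightarrow> bool" where
  "qc_open X U \<longleftrightarrow> openin X U \<and> compactin X U"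

definition irreducible_closed :: "'a topology \<Rightarrow> 'a set \<Rightarrow> bool" where
  "irreducible_closed X C \<longleftrightarrow> closedin X C \<and> C \<noteq> {} \<and>
     (\<forall>A B. closedin X A \<and> closedin X B \<and> C \<subseteq> A \<union> B \<longrightarrow> C \<subseteq> A \<or> C \<subseteq> B)"

definition sober_space :: "'a topology \<Rightarrow> bool" where
  "sober_space X \<longleftrightarrow> (\<forall>C. irreducible_closed X C \<longrightarrow>
     (\<exists>!x. x \<in> topspace X \<and> C = X closure_of {x}))"

definition spectral_space :: "'a topology \<Rightarrow> bool" where
  "spectral_space X \<longleftrightarrow> compact_space X \<and> sober_space X \<and>
     (\<forall>U V. qc_open X U \<and> qc_open X V \<longrightarrow> qc_open X (U \<inter> V)) \<and>
     (\<forall>W x. openin X W \<and> x \<in> W \<longrightarrow> (\<exists>U. qc_open X U \<and> x \<in> U \<and> U \<subseteq> W))"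

definition inverse_topology :: "'a topology \<Rightarrow> 'a topology" where
  "inverse_topology X = topology_generated_by {topspace X - U | U. qc_open X U}"

definition nonempty_closed :: "'a topology \<Rightarrow> 'a set set" where
  "nonempty_closed X = {Y. closedin X Y \<and> Y \<noteq> {}}"

definition zar_basic :: "'a topology \<Rightarrow> 'a set \<Rightarrow> 'a set set" where
  "zar_basic X \<Omega> = {Y \<in> nonempty_closed X. Y \<inter> \<Omega> = {}}"

definition zariski_closed_sets :: "'a topology \<Rightarrow> 'a set topology" where
  "zariski_closed_sets X = topology_generated_by {zar_basic X \<Omega> | \<Omega>. qc_open X \<Omega>}"

end

theory Submission
  imports Defs
begin

(* The map x \<mapsto> Cl {x} pulls the basic Zariski open U'(\<Omega>) back to X - \<Omega>, and these sets
   generate the inverse topology; so the inverse topology is exactly the initial topology of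
   the map. An injective map is an embedding for its initial topology, and injectivity is the
   T0 property, which every sober space has. *)

lemma pullback_topology_generated_by:
  "pullback_topology A f (topology_generated_by \<S>) =
     topology_generated_by ((\<lambda>V. f -` V \<inter> A) ` \<S>)"
  unfolding topology_eq openin_pullback_topology openin_topology_generated_by_iff
proof (intro allI iffI)
  fix S assume "\<exists>U. generate_topology_on \<S> U \<and> S = f -` U \<inter> A"
  then obtain U where "generate_topology_on \<S> U" and "S = f -` U \<inter> A" by blast
  then show "generate_topology_on ((\<lambda>V. f -` V \<inter> A) ` \<S>) S"
  proof (induction arbitrary: S)
    case Empty
    then show ?case by (simp add: generate_topology_on.Empty)
  next
    case (Int a b)
    then show ?case
      using generate_topology_on.Int[of _ "f -` a \<inter> A" "f -` b \<inter> A"] by (simp add: Int_ac)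
  next
    case (UN K)
    then have "S = \<Union>((\<lambda>k. f -` k \<inter> A) ` K)" by blast
    then show ?case
      using UN.IH generate_topology_on.UN[of "(\<lambda>k. f -` k \<inter> A) ` K"] by blast
  next
    case (Basis s)
    then show ?case by (simp add: generate_topology_on.Basis)
  qed
next
  fix S assume "generate_topology_on ((\<lambda>V. f -` V \<inter> A) ` \<S>) S"
  then have "openin (pullback_topology A f (topology_generated_by \<S>)) S"
  proof (rule generate_topology_on_coarsest[OF istopology_openin, rotated])
    fix S' assume "S' \<in> (\<lambda>V. f -` V \<inter> A) ` \<S>"
    then show "openin (pullback_topology A f (topology_generated_by \<S>)) S'"
      unfolding openin_pullback_topology using topology_generated_by_Basis by blast
  qed
  then show "\<exists>U. generate_topology_on \<S> U \<and> S = f -` U \<inter> A"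
    unfolding openin_pullback_topology openin_topology_generated_by_iff .
qed

lemma embedding_map_pullback_topology:
  assumes "inj_on f A" and "f ` A \<subseteq> topspace Y"
  shows "embedding_map (pullback_topology A f Y) Y f"
proof -
  have topspace: "topspace (pullback_topology A f Y) = A"
    using assms(2) by (auto simp: topspace_pullback_topology)
  have "continuous_map (pullback_topology A f Y) (subtopology Y (f ` A)) f"
    using continuous_map_pullback[OF continuous_map_id, of A f Y]
    by (simp add: continuous_map_in_subtopology topspace)
  moreover have "open_map (pullback_topology A f Y) (subtopology Y (f ` A)) f"
    unfolding open_map_def openin_pullback_topology openin_subtopology by blast
  ultimately show ?thesis
    using assms(1) injective_open_imp_embedding_map embedding_map_in_subtopology topspace
    by metis
qed

lemma irreducible_closed_closure_of_singleton:
  assumes "x \<in> topspace X"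
  shows "irreducible_closed X (X closure_of {x})"
  unfolding irreducible_closed_def
proof (intro conjI allI impI)
  have x: "x \<in> X closure_of {x}"
    using assms closure_of_subset[of "{x}" X] by blast
  then show "X closure_of {x} \<noteq> {}" by blast
  fix A B assume AB: "closedin X A \<and> closedin X B \<and> X closure_of {x} \<subseteq> A \<union> B"
  then have "x \<in> A \<or> x \<in> B" using x by blast
  then show "X closure_of {x} \<subseteq> A \<or> X closure_of {x} \<subseteq> B"
    using AB closure_of_minimal[of "{x}" _ X] by blast
qed simp

lemma sober_imp_t0_space:
  assumes "sober_space X"
  shows "t0_space X"
  unfolding t0_space_closure_of_sing
proof (intro ballI impI)
  fix x y assume x: "x \<in> topspace X" and y: "y \<in> topspace X"
    and eq: "X closure_of {x} = X closure_of {y}"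
  have "\<exists>!z. z \<in> topspace X \<and> X closure_of {x} = X closure_of {z}"
    using assms irreducible_closed_closure_of_singleton[OF x] unfolding sober_space_def by simp
  then show "x = y"
    using x y eq by blast
qed

lemma qc_open_empty: "qc_open X {}"
  unfolding qc_open_def by simp

lemma vimage_closure_of_singleton_zar_basic:
  assumes "openin X \<Omega>"
  shows "(\<lambda>x. X closure_of {x}) -` zar_basic X \<Omega> \<inter> topspace X = topspace X - \<Omega>"
proof -
  have "X closure_of {x} \<in> zar_basic X \<Omega> \<longleftrightarrow> x \<notin> \<Omega>" if "x \<in> topspace X" for x
    using that openin_Int_closure_of_eq_empty[OF assms, of "{x}"]
    by (auto simp: zar_basic_def nonempty_closed_def closure_of_eq_empty_gen Int_commute)
  then show ?thesis
    by blast
qed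

lemma inverse_topology_eq_pullback:
  "inverse_topology X =
     pullback_topology (topspace X) (\<lambda>x. X closure_of {x}) (zariski_closed_sets X)"
proof -
  let ?pull = "\<lambda>V. (\<lambda>x. X closure_of {x}) -` V \<inter> topspace X"
  have "?pull ` {zar_basic X \<Omega> | \<Omega>. qc_open X \<Omega>} = {?pull (zar_basic X \<Omega>) | \<Omega>. qc_open X \<Omega>}"
    by blast
  also have "\<dots> = {topspace X - \<Omega> | \<Omega>. qc_open X \<Omega>}"
  proof (intro Collect_cong)
    have "?pull (zar_basic X \<Omega>) = topspace X - \<Omega>" if "qc_open X \<Omega>" for \<Omega>
      using that by (simp add: qc_open_def vimage_closure_of_singleton_zar_basic)
    then show "(\<exists>\<Omega>. U = ?pull (zar_basic X \<Omega>) \<and> qc_open X \<Omega>) \<longleftrightarrow>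
        (\<exists>\<Omega>. U = topspace X - \<Omega> \<and> qc_open X \<Omega>)" for U
      by metis
  qed
  finally show ?thesis
    unfolding inverse_topology_def zariski_closed_sets_def pullback_topology_generated_by
    by simp
qed

lemma closure_of_singleton_in_zariski_topspace:
  assumes "x \<in> topspace X"
  shows "X closure_of {x} \<in> topspace (zariski_closed_sets X)"
proof -
  have "X closure_of {x} \<in> zar_basic X {}"
    using assms by (simp add: zar_basic_def nonempty_closed_def closure_of_eq_empty_gen)
  then show ?thesis
    unfolding zariski_closed_sets_def using qc_open_empty by auto
qed

lemma t0_embedding_inverse_topology_zariski:
  assumes "t0_space X"
  shows "embedding_map (inverse_topology X) (zariski_closed_sets X) (\<lambda>x. X closure_of {x})"
  unfolding inverse_topology_eq_pullback
proof (rule embedding_map_pullback_topology)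
  show "inj_on (\<lambda>x. X closure_of {x}) (topspace X)"
    using assms unfolding t0_space_closure_of_sing inj_on_def by blast
  show "(\<lambda>x. X closure_of {x}) ` topspace X \<subseteq> topspace (zariski_closed_sets X)"
    by (intro image_subsetI closure_of_singleton_in_zariski_topspace)
qed

theorem mainTheorem14:
  fixes X :: "'a topology"
  assumes "spectral_space X"
  shows "embedding_map (inverse_topology X) (zariski_closed_sets X) (\<lambda>x. X closure_of {x})"
proof -
  have "sober_space X"
    using assms unfolding spectral_space_def by blast
  then show ?thesis
    by (intro t0_embedding_inverse_topology_zariski sober_imp_t0_space)
qed

end
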